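(* Let $X_1,\dots,X_n$ be features and $Y$ a target that is not a.s. constant. Then for every $i\in\{1,\dots,n\}$, $\mathrm{FI}(i)\in[0,1]$.
   Context: All random variables are discrete with finite support and defined on a common probability space. For discrete random variables (or random vectors) $X$ and $Y$, define $$\mathrm{UD}(X,Y):=\sum_x p_X(x)\sum_y \bigl|p_{Y\mid X=x}(y)-p_Y(y)\bigr|,$$ and, when $Y$ is not almost surely constant, $\mathrm{Dep}(X,Y):=\mathrm{UD}(X,Y)/\mathrm{UD}(Y,Y)$. Given features $X_1,\dots,X_n$ with index set $\mathcal{F}=\{1,\dots,n\}$ and $S\subseteq\mathcal{F}$, write $X_S=(X_i)_{i\in S}$ ($X_\emptyset$ constant) and $\mathrm{Dep}(S,Y):=\mathrm{Dep}(X_S,Y)$. The Berkelmans–Pries feature importance is $$\mathrm{FI}(i):=\sum_{S\subseteq\mathcal{F}\setminus\{i\}}\frac{|S|!\,(n-|S|-1)!}{n!}\bigl(\mathrm{Dep}(S\cup\{i\},Y)-\mathrm{Dep}(S,Y)\bigr).$$ *)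

theory Defs
  imports "HOL-Probability.Probability"
begin

text \<open>The common probability space is a discrete probability distribution M on outcomes 'w.
  Random variables are functions on outcomes; finite support is an explicit assumption.\<close>

definition pX :: "'w pmf \<Rightarrow> ('w \<Rightarrow> 'a) \<Rightarrow> 'a \<Rightarrow> real" where
  "pX M A x = measure_pmf.prob M (A -` {x})"

definition pcond :: "'w pmf \<Rightarrow> ('w \<Rightarrow> 'b) \<Rightarrow> ('w \<Rightarrow> 'a) \<Rightarrow> 'b \<Rightarrow> 'a \<Rightarrow> real" where
  "pcond M B A y x = measure_pmf.prob M (A -` {x} \<inter> B -` {y}) / measure_pmf.prob M (A -` {x})"

definition supp :: "'w pmf \<Rightarrow> ('w \<Rightarrow> 'a) \<Rightarrow> 'a set" where
  "supp M A = A ` set_pmf M"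

definition UD :: "'w pmf \<Rightarrow> ('w \<Rightarrow> 'a) \<Rightarrow> ('w \<Rightarrow> 'b) \<Rightarrow> real" where
  "UD M A B = (\<Sum>x\<in>supp M A. pX M A x * (\<Sum>y\<in>supp M B. \<bar>pcond M B A y x - pX M B y\<bar>))"

definition Dep :: "'w pmf \<Rightarrow> ('w \<Rightarrow> 'a) \<Rightarrow> ('w \<Rightarrow> 'b) \<Rightarrow> real" where
  "Dep M A B = UD M A B / UD M B B"

definition featvec :: "(nat \<Rightarrow> 'w \<Rightarrow> 'v) \<Rightarrow> nat set \<Rightarrow> 'w \<Rightarrow> (nat \<Rightarrow> 'v)" where
  "featvec X S = (\<lambda>w. restrict (\<lambda>i. X i w) S)"

definition DepS :: "'w pmf \<Rightarrow> (nat \<Rightarrow> 'w \<Rightarrow> 'v) \<Rightarrow> nat set \<Rightarrow> ('w \<Rightarrow> 'y) \<Rightarrow> real" where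
  "DepS M X S Y = Dep M (featvec X S) Y"

definition FI :: "'w pmf \<Rightarrow> nat \<Rightarrow> (nat \<Rightarrow> 'w \<Rightarrow> 'v) \<Rightarrow> ('w \<Rightarrow> 'y) \<Rightarrow> nat \<Rightarrow> real" where
  "FI M n X Y i = (\<Sum>S\<in>Pow ({1..n} - {i}).
     fact (card S) * fact (n - card S - 1) / fact n *
     (DepS M X (S \<union> {i}) Y - DepS M X S Y))"

end

theory Submission
  imports Defs
begin

text \<open>
  Dep(X, Y) normalises the L1 distance between the joint law of (X, Y) and the product of its
  marginals. Replacing X by a function of X merges rows of this discrepancy table, which by the
  triangle inequality can only shrink the distance; so Dep(S, Y) is monotone in S, and
  Dep(X, Y) \<le> Dep((X, Y), Y) = Dep(Y, Y) = 1. Hence every marginal contribution in FI(i) lies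
  in [0, 1]. The Shapley weights over the subsets of {1..n} - {i} sum to 1, because the
  C(n-1, k) subsets of size k each have weight k! (n-k-1)! / n!, so FI(i) is a convex
  combination of numbers in [0, 1].
\<close>

abbreviation Pr :: "'w pmf \<Rightarrow> 'w set \<Rightarrow> real" where
  "Pr M E \<equiv> measure_pmf.prob M E"

lemma prob_eq_sum_preimages:
  assumes "finite (supp M A)"
  shows "Pr M E = (\<Sum>x\<in>supp M A. Pr M (A -` {x} \<inter> E))"
proof -
  have "Pr M {w\<in>space (measure_pmf M). w \<in> E} =
      (\<Sum>x\<in>supp M A. Pr M {w\<in>space (measure_pmf M). A w = x \<and> w \<in> E})"
    using assms by (intro measure_pmf.prob_sum) (auto simp: supp_def intro!: AE_pmfI)
  then show ?thesis by (simp add: Int_def vimage_def conj_commute)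
qed

lemma supp_comp: "(\<And>w. A w = f (A' w)) \<Longrightarrow> supp M A = f ` supp M A'"
  unfolding supp_def by (auto simp: image_image)

lemma prob_preimage_comp_eq_sum:
  assumes fin: "finite (supp M A')" and f: "\<And>w. A w = f (A' w)"
  shows "Pr M (A -` {x} \<inter> E) = (\<Sum>x'\<in>{x'\<in>supp M A'. f x' = x}. Pr M (A' -` {x'} \<inter> E))"
proof -
  have "Pr M (A -` {x} \<inter> E) = (\<Sum>x'\<in>supp M A'. Pr M (A' -` {x'} \<inter> (A -` {x} \<inter> E)))"
    by (rule prob_eq_sum_preimages[OF fin])
  also have "\<dots> = (\<Sum>x'\<in>supp M A'. if f x' = x then Pr M (A' -` {x'} \<inter> E) else 0)"
  proof (intro sum.cong refl)
    fix x'
    have "A' -` {x'} \<inter> (A -` {x} \<inter> E) = (if f x' = x then A' -` {x'} \<inter> E else {})"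
      using f by auto
    then show "Pr M (A' -` {x'} \<inter> (A -` {x} \<inter> E)) =
        (if f x' = x then Pr M (A' -` {x'} \<inter> E) else 0)"
      by simp
  qed
  also have "\<dots> = (\<Sum>x'\<in>{x'\<in>supp M A'. f x' = x}. Pr M (A' -` {x'} \<inter> E))"
    by (simp add: sum.inter_filter fin)
  finally show ?thesis .
qed

lemma pX_comp_eq_sum:
  assumes "finite (supp M A')" and "\<And>w. A w = f (A' w)"
  shows "pX M A x = (\<Sum>x'\<in>{x'\<in>supp M A'. f x' = x}. pX M A' x')"
  using prob_preimage_comp_eq_sum[where A=A and f=f and x=x and E=UNIV, OF assms]
  by (simp add: pX_def)

lemma pX_pos: "x \<in> supp M A \<Longrightarrow> pX M A x > 0"
  unfolding pX_def supp_def by (auto simp: measure_pmf_posI)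

lemma UD_eq_sum_abs_joint_minus_product:
  "UD M A B = (\<Sum>x\<in>supp M A. \<Sum>y\<in>supp M B.
      \<bar>Pr M (A -` {x} \<inter> B -` {y}) - pX M A x * pX M B y\<bar>)"
  unfolding UD_def
proof (intro sum.cong refl)
  fix x assume "x \<in> supp M A"
  then have pos: "pX M A x > 0" by (rule pX_pos)
  have "pX M A x * (\<Sum>y\<in>supp M B. \<bar>pcond M B A y x - pX M B y\<bar>)
      = (\<Sum>y\<in>supp M B. \<bar>pX M A x * pcond M B A y x - pX M A x * pX M B y\<bar>)"
    using pos by (simp add: sum_distrib_left abs_mult right_diff_distrib[symmetric])
  also have "\<dots> = (\<Sum>y\<in>supp M B. \<bar>Pr M (A -` {x} \<inter> B -` {y}) - pX M A x * pX M B y\<bar>)"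
    using pos by (simp add: pcond_def pX_def)
  finally show "pX M A x * (\<Sum>y\<in>supp M B. \<bar>pcond M B A y x - pX M B y\<bar>) =
      (\<Sum>y\<in>supp M B. \<bar>Pr M (A -` {x} \<inter> B -` {y}) - pX M A x * pX M B y\<bar>)" .
qed

lemma UD_nonneg: "UD M A B \<ge> 0"
  unfolding UD_def by (intro sum_nonneg mult_nonneg_nonneg) (auto simp: pX_def)

lemma UD_comp_le:
  assumes fin: "finite (supp M A')" and f: "\<And>w. A w = f (A' w)"
  shows "UD M A B \<le> UD M A' B"
proof -
  define S where "S x = {x'\<in>supp M A'. f x' = x}" for x
  define d where "d x' y = \<bar>Pr M (A' -` {x'} \<inter> B -` {y}) - pX M A' x' * pX M B y\<bar>" for x' y
  have merge: "\<bar>Pr M (A -` {x} \<inter> B -` {y}) - pX M A x * pX M B y\<bar> \<le> (\<Sum>x'\<in>S x. d x' y)"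
    for x y
  proof -
    have "Pr M (A -` {x} \<inter> B -` {y}) - pX M A x * pX M B y
        = (\<Sum>x'\<in>S x. Pr M (A' -` {x'} \<inter> B -` {y}) - pX M A' x' * pX M B y)"
      unfolding S_def prob_preimage_comp_eq_sum[where A=A and f=f, OF fin f]
        pX_comp_eq_sum[where A=A and f=f, OF fin f]
      by (simp add: sum_subtractf sum_distrib_right)
    then show ?thesis unfolding d_def by (simp add: sum_abs)
  qed
  have "UD M A B \<le> (\<Sum>x\<in>supp M A. \<Sum>y\<in>supp M B. \<Sum>x'\<in>S x. d x' y)"
    unfolding UD_eq_sum_abs_joint_minus_product by (intro sum_mono merge)
  also have "\<dots> = (\<Sum>x\<in>f ` supp M A'. \<Sum>x'\<in>S x. \<Sum>y\<in>supp M B. d x' y)"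
    by (simp add: supp_comp[of A f A' M, OF f] sum.swap[of _ "supp M B"])
  also have "\<dots> = (\<Sum>x'\<in>supp M A'. \<Sum>y\<in>supp M B. d x' y)"
    unfolding S_def by (rule sum.image_gen[OF fin, symmetric])
  also have "\<dots> = UD M A' B"
    unfolding UD_eq_sum_abs_joint_minus_product d_def ..
  finally show ?thesis .
qed

lemma UD_determined_eq_sum:
  assumes g: "\<And>w. B w = g (A w)"
  shows "UD M A B = (\<Sum>x\<in>supp M A. pX M A x *
      (\<Sum>y\<in>supp M B. \<bar>(if g x = y then 1 else 0) - pX M B y\<bar>))"
  unfolding UD_eq_sum_abs_joint_minus_product sum_distrib_left
proof (intro sum.cong refl)
  fix x y
  have "A -` {x} \<inter> B -` {y} = (if g x = y then A -` {x} else {})"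
    using g by auto
  then have "Pr M (A -` {x} \<inter> B -` {y}) = (if g x = y then pX M A x else 0)"
    by (simp add: pX_def)
  moreover have "pX M A x \<ge> 0" by (simp add: pX_def)
  moreover have "pX M A x - pX M A x * pX M B y = pX M A x * (1 - pX M B y)"
    by (simp add: algebra_simps)
  ultimately show "\<bar>Pr M (A -` {x} \<inter> B -` {y}) - pX M A x * pX M B y\<bar> =
      pX M A x * \<bar>(if g x = y then 1 else 0) - pX M B y\<bar>"
    by (simp add: abs_mult)
qed

lemma UD_determined_eq_UD_self:
  assumes fin: "finite (supp M A)" and g: "\<And>w. B w = g (A w)"
  shows "UD M A B = UD M B B"
proof -
  define c where "c y = (\<Sum>y'\<in>supp M B. \<bar>(if y = y' then 1 else 0) - pX M B y'\<bar>)" for y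
  have "UD M A B = (\<Sum>x\<in>supp M A. pX M A x * c (g x))"
    unfolding UD_determined_eq_sum[where g=g, OF g] c_def ..
  also have "\<dots> = (\<Sum>y\<in>g ` supp M A. \<Sum>x\<in>{x\<in>supp M A. g x = y}. pX M A x * c (g x))"
    by (rule sum.image_gen[OF fin])
  also have "\<dots> = (\<Sum>y\<in>supp M B. pX M B y * c y)"
    by (simp add: supp_comp[of B g A M, OF g] sum_distrib_right
        pX_comp_eq_sum[where A=B and f=g, OF fin g])
  also have "\<dots> = UD M B B"
    using UD_determined_eq_sum[of B "\<lambda>x. x" B M] unfolding c_def by simp
  finally show ?thesis .
qed

lemma Dep_nonneg: "Dep M A B \<ge> 0"
  unfolding Dep_def by (intro divide_nonneg_nonneg UD_nonneg)

lemma Dep_comp_le: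
  assumes "finite (supp M A')" and "\<And>w. A w = f (A' w)"
  shows "Dep M A B \<le> Dep M A' B"
  unfolding Dep_def by (intro divide_right_mono UD_comp_le[where f=f, OF assms] UD_nonneg)

lemma Dep_le_1:
  assumes fA: "finite (supp M A)" and fB: "finite (supp M B)"
  shows "Dep M A B \<le> 1"
proof -
  define AB where "AB w = (A w, B w)" for w
  have "supp M AB \<subseteq> supp M A \<times> supp M B" unfolding supp_def AB_def by auto
  then have fin: "finite (supp M AB)" using fA fB by (auto intro: finite_subset)
  have "UD M A B \<le> UD M AB B" by (rule UD_comp_le[where f=fst, OF fin]) (simp add: AB_def)
  also have "\<dots> = UD M B B"
    by (rule UD_determined_eq_UD_self[where g=snd, OF fin]) (simp add: AB_def)
  finally show ?thesis
    using UD_nonneg[of M B B] unfolding Dep_def by (cases "UD M B B = 0") (auto simp: divide_le_eq_1)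
qed

lemma finite_supp_featvec:
  assumes "finite S" and "\<And>j. j \<in> S \<Longrightarrow> finite (supp M (X j))"
  shows "finite (supp M (featvec X S))"
proof (rule finite_subset)
  show "supp M (featvec X S) \<subseteq> PiE S (\<lambda>j. supp M (X j))"
    unfolding supp_def featvec_def by auto
  show "finite (PiE S (\<lambda>j. supp M (X j)))"
    using assms by (intro finite_PiE)
qed

lemma featvec_restrict: "S \<subseteq> T \<Longrightarrow> featvec X S w = restrict (featvec X T w) S"
  unfolding featvec_def by (auto simp: fun_eq_iff)

lemma DepS_increment_bounds:
  assumes "finite T" and "\<And>j. j \<in> T \<Longrightarrow> finite (supp M (X j))"
    and "finite (supp M Y)" and "S \<subseteq> T"
  shows "0 \<le> DepS M X T Y - DepS M X S Y" and "DepS M X T Y - DepS M X S Y \<le> 1"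
proof -
  have fin: "finite (supp M (featvec X T))" by (rule finite_supp_featvec) fact+
  have "Dep M (featvec X S) Y \<le> Dep M (featvec X T) Y"
    by (rule Dep_comp_le[where f="\<lambda>v. restrict v S", OF fin featvec_restrict[OF \<open>S \<subseteq> T\<close>]])
  then show "0 \<le> DepS M X T Y - DepS M X S Y" by (simp add: DepS_def)
  have "Dep M (featvec X T) Y \<le> 1" by (rule Dep_le_1[OF fin \<open>finite (supp M Y)\<close>])
  with Dep_nonneg[of M "featvec X S" Y]
  show "DepS M X T Y - DepS M X S Y \<le> 1" by (simp add: DepS_def)
qed

lemma sum_Pow_card:
  assumes "finite F"
  shows "(\<Sum>S\<in>Pow F. h (card S)) = (\<Sum>k\<le>card F. of_nat (card F choose k) * h k)"
proof -
  have card_image: "card ` Pow F = {..card F}"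
  proof
    show "card ` Pow F \<subseteq> {..card F}" using assms by (auto intro: card_mono)
    show "{..card F} \<subseteq> card ` Pow F"
      using assms by (auto dest: obtain_subset_with_card_n)
  qed
  have "(\<Sum>S\<in>Pow F. h (card S)) = (\<Sum>k\<in>card ` Pow F. \<Sum>S\<in>{S\<in>Pow F. card S = k}. h (card S))"
    using assms by (intro sum.image_gen) simp
  also have "\<dots> = (\<Sum>k\<le>card F. of_nat (card {S. S \<subseteq> F \<and> card S = k}) * h k)"
    unfolding card_image by (intro sum.cong refl) (simp add: Pow_def conj_commute)
  finally show ?thesis by (simp add: n_subsets[OF assms])
qed

lemma sum_Shapley_weights:
  assumes "finite F"
  shows "(\<Sum>S\<in>Pow F. fact (card S) * fact (card F - card S) / fact (Suc (card F))) = (1::real)"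
proof -
  have "(\<Sum>S\<in>Pow F. fact (card S) * fact (card F - card S) / fact (Suc (card F)))
      = (\<Sum>k\<le>card F. real (card F choose k) * (fact k * fact (card F - k) / fact (Suc (card F))))"
    by (rule sum_Pow_card[OF assms])
  also have "\<dots> = (\<Sum>k\<le>card F. 1 / real (Suc (card F)))"
    by (intro sum.cong refl) (simp add: binomial_fact)
  finally show ?thesis by simp
qed

lemma sum_weighted_in_unit_interval:
  fixes w a :: "'a \<Rightarrow> real"
  assumes "finite A" and "\<And>x. x \<in> A \<Longrightarrow> w x \<ge> 0" and "sum w A = 1"
    and "\<And>x. x \<in> A \<Longrightarrow> 0 \<le> a x \<and> a x \<le> 1"
  shows "(\<Sum>x\<in>A. w x * a x) \<in> {0..1}"
proof -
  have "(\<Sum>x\<in>A. w x * a x) \<le> (\<Sum>x\<in>A. w x)"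
    using assms by (intro sum_mono) (simp add: mult_left_le)
  moreover have "(\<Sum>x\<in>A. w x * a x) \<ge> 0"
    using assms by (intro sum_nonneg) simp
  ultimately show ?thesis using assms by simp
qed

theorem mainTheorem4:
  fixes M :: "'w pmf" and n :: nat and X :: "nat \<Rightarrow> 'w \<Rightarrow> 'v" and Y :: "'w \<Rightarrow> 'y"
    and i :: nat
  assumes finX: "\<And>j. j \<in> {1..n} \<Longrightarrow> finite (supp M (X j))"
    and finY: "finite (supp M Y)"
    and nonconst: "\<not> (\<exists>c. AE w in measure_pmf M. Y w = c)"
    and i: "i \<in> {1..n}"
  shows "FI M n X Y i \<in> {0..1}"
proof -
  define F where "F = {1..n} - {i}"
  define w where "w S = fact (card S) * fact (n - card S - 1) / (fact n :: real)" for S :: "nat set"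
  define \<Delta> where "\<Delta> S = DepS M X (S \<union> {i}) Y - DepS M X S Y" for S
  have FI: "FI M n X Y i = (\<Sum>S\<in>Pow F. w S * \<Delta> S)"
    unfolding FI_def F_def w_def \<Delta>_def ..
  have "0 \<le> \<Delta> S \<and> \<Delta> S \<le> 1" if "S \<in> Pow F" for S
  proof -
    have "S \<union> {i} \<subseteq> {1..n}" using that i by (auto simp: F_def)
    then have "finite (S \<union> {i})" and "\<And>j. j \<in> S \<union> {i} \<Longrightarrow> finite (supp M (X j))"
      using finX by (auto intro: finite_subset)
    from DepS_increment_bounds[OF this finY Un_upper1] show ?thesis by (simp add: \<Delta>_def)
  qed
  moreover have "(\<Sum>S\<in>Pow F. w S) = 1"
  proof -
    have "finite F" and "n = Suc (card F)" using i by (auto simp: F_def)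
    then show ?thesis
      using sum_Shapley_weights[of F] unfolding w_def by simp
  qed
  ultimately show ?thesis
    unfolding FI using i by (intro sum_weighted_in_unit_interval) (auto simp: w_def F_def)
qed

end
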